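(* Let $G=(V,E)$ be a finite simple undirected graph, $k\ge1$ an integer, $S\subseteq V$ a $k$-plex, and $C\subseteq V$ with $C\cap S=\emptyset$. Let $v\in C$, and list the neighbors of $v$ in $C$ as $N(v)\cap C=\{v_1,\dots,v_d\}$ so that $|\overline{N}_{v_1}(S)|\le |\overline{N}_{v_2}(S)|\le\cdots\le|\overline{N}_{v_d}(S)|$. For $0\le i\le d$ let $T^i=\{v_1,\dots,v_i\}$ and let $$r=\max\Big\{i\in\{0,\dots,d\} : \sum_{u\in T^i}|\overline{N}_u(S)|\le \mathrm{sup}(S)\Big\}.$$ Then every $k$-plex $S'$ with $S\cup\{v\}\subseteq S'\subseteq S\cup C$ satisfies $|S'|\le |S|+k-|\overline{N}_v(S)|+r$.
   Context: $N(x)$ denotes the set of neighbors of $x$ in $G$ ($x\notin N(x)$). For $x\in V$ and $T\subseteq V$, $\overline{N}_x(T)=T\setminus N(x)$ is the set of non-neighbors of $x$ in $T$; note that if $x\in T$ then $x\in\overline{N}_x(T)$. A set $T\subseteq V$ is a $k$-plex if every vertex $u\in T$ satisfies $|N(u)\cap T|\ge |T|-k$ (equivalently $|\overline{N}_u(T)|\le k$). For a $k$-plex $S$, $\mathrm{sup}(S)=\sum_{w\in S}\big(k-|\overline{N}_w(S)|\big)$. *)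

theory Defs
  imports Main
begin

definition simple_graph :: "'a set \<Rightarrow> ('a \<Rightarrow> 'a \<Rightarrow> bool) \<Rightarrow> bool" where
  "simple_graph V E \<longleftrightarrow> finite V \<and> (\<forall>x y. E x y \<longrightarrow> x \<in> V \<and> y \<in> V)
     \<and> (\<forall>x y. E x y \<longrightarrow> E y x) \<and> (\<forall>x. \<not> E x x)"

definition nbrs :: "('a \<Rightarrow> 'a \<Rightarrow> bool) \<Rightarrow> 'a \<Rightarrow> 'a set" where
  "nbrs E x = {y. E x y}"

text \<open>Non-neighbours of x in T (contains x if x is in T).\<close>
definition non_nbrs :: "('a \<Rightarrow> 'a \<Rightarrow> bool) \<Rightarrow> 'a \<Rightarrow> 'a set \<Rightarrow> 'a set" where
  "non_nbrs E x T = T - nbrs E x"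

definition is_kplex :: "'a set \<Rightarrow> ('a \<Rightarrow> 'a \<Rightarrow> bool) \<Rightarrow> nat \<Rightarrow> 'a set \<Rightarrow> bool" where
  "is_kplex V E k T \<longleftrightarrow> T \<subseteq> V \<and> (\<forall>u\<in>T. card (nbrs E u \<inter> T) + k \<ge> card T)"

definition sup_plex :: "('a \<Rightarrow> 'a \<Rightarrow> bool) \<Rightarrow> nat \<Rightarrow> 'a set \<Rightarrow> int" where
  "sup_plex E k S = (\<Sum>w\<in>S. int k - int (card (non_nbrs E w S)))"

end

theory Submission
  imports Defs
begin

text \<open>Split the new vertices \<open>S' - S\<close> into the neighbours \<open>A\<close> of \<open>v\<close>, which lie in \<open>N(v) \<inter> C\<close>,
and the non-neighbours \<open>B\<close>. All of \<open>B\<close> and all non-neighbours of \<open>v\<close> in \<open>S\<close> are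
non-neighbours of \<open>v\<close> in \<open>S'\<close>, so there are at most \<open>k\<close> of them. Double counting the
non-edges between \<open>A\<close> and \<open>S\<close>, and using that each \<open>w \<in> S\<close> has room for at most
\<open>k - |non_nbrs E w S|\<close> non-neighbours in \<open>A\<close>, shows that the non-neighbour counts of the
vertices of \<open>A\<close> sum to at most \<open>sup(S)\<close>. Any \<open>|A|\<close> entries of the sorted list sum to at
least its first \<open>|A|\<close> entries, hence \<open>|A| \<le> r\<close>.\<close>

lemma sum_take_card_le_sum:
  fixes f :: "'a \<Rightarrow> nat"
  assumes "distinct xs" "sorted (map f xs)" "A \<subseteq> set xs"
  shows "(\<Sum>u\<in>set (take (card A) xs). f u) \<le> (\<Sum>u\<in>A. f u)"
  using assms
proof (induction xs arbitrary: A)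
  case Nil
  then show ?case by simp
next
  case (Cons x xs)
  have fin: "finite A" using Cons.prems(3) finite_subset by blast
  show ?case
  proof (cases "A = {}")
    case True
    then show ?thesis by simp
  next
    case False
    \<comment> \<open>remove from \<open>A\<close> either \<open>x\<close> itself or any element, which is at least \<open>f x\<close> by sortedness\<close>
    obtain a where a: "a \<in> A" "f x \<le> f a" "A - {a} \<subseteq> set xs"
    proof (cases "x \<in> A")
      case True
      then show ?thesis using Cons.prems(3) that by auto
    next
      case False
      with \<open>A \<noteq> {}\<close> Cons.prems(2,3) show ?thesis using that by fastforce
    qed
    have card_A: "card A = Suc (card (A - {a}))"
      using a(1) fin by (metis card_Suc_Diff1)
    have "x \<notin> set (take (card (A - {a})) xs)"
      using Cons.prems(1) by (meson distinct.simps(2) in_set_takeD)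
    then have "(\<Sum>u\<in>set (take (card A) (x#xs)). f u)
        = f x + (\<Sum>u\<in>set (take (card (A - {a})) xs). f u)"
      using card_A by simp
    also have "\<dots> \<le> f a + (\<Sum>u\<in>A - {a}. f u)"
      using Cons.IH[of "A - {a}"] Cons.prems(1,2) a(2,3) by (intro add_mono) auto
    also have "\<dots> = (\<Sum>u\<in>A. f u)"
      using a(1) fin by (simp add: sum.remove)
    finally show ?thesis .
  qed
qed

lemma card_le_Max_prefix_bound:
  fixes f :: "'a \<Rightarrow> nat" and b :: int
  assumes "distinct xs" "sorted (map f xs)" "A \<subseteq> set xs"
    and "int (\<Sum>u\<in>A. f u) \<le> b"
  shows "card A \<le> Max {i. i \<le> length xs \<and> int (\<Sum>u\<in>set (take i xs). f u) \<le> b}"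
proof (rule Max_ge)
  show "finite {i. i \<le> length xs \<and> int (\<Sum>u\<in>set (take i xs). f u) \<le> b}"
    by (rule finite_subset[of _ "{..length xs}"]) auto
  have "card A \<le> length xs"
    using card_mono[OF _ assms(3)] distinct_card[OF assms(1)] by simp
  moreover have "int (\<Sum>u\<in>set (take (card A) xs). f u) \<le> b"
    using sum_take_card_le_sum[OF assms(1-3)] assms(4) by linarith
  ultimately show "card A \<in> {i. i \<le> length xs \<and> int (\<Sum>u\<in>set (take i xs). f u) \<le> b}"
    by simp
qed

lemma card_non_nbrs_Un_disjoint:
  assumes "finite T" "finite U" "T \<inter> U = {}"
  shows "card (non_nbrs E x (T \<union> U)) = card (non_nbrs E x T) + card (non_nbrs E x U)"
proof -
  have "non_nbrs E x (T \<union> U) = non_nbrs E x T \<union> non_nbrs E x U"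
    by (auto simp: non_nbrs_def)
  then show ?thesis
    using assms by (simp add: card_Un_disjoint non_nbrs_def Diff_Int_distrib2 [symmetric] disjoint_iff)
qed

lemma kplex_card_non_nbrs_le:
  assumes "is_kplex V E k S" "finite S" "x \<in> S" "T \<subseteq> S"
  shows "card (non_nbrs E x T) \<le> k"
proof -
  have "card (non_nbrs E x T) \<le> card (non_nbrs E x S)"
    using assms(2,4) by (intro card_mono) (auto simp: non_nbrs_def)
  also have "card (non_nbrs E x S) = card S - card (nbrs E x \<inter> S)"
    using assms(2) by (metis Diff_Int2 Int_lower2 card_Diff_subset finite_Int inf.idem non_nbrs_def)
  also have "\<dots> \<le> k"
    using assms(1,3) unfolding is_kplex_def by auto
  finally show ?thesis .
qed

lemma sum_card_non_nbrs_swap: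
  assumes "\<And>x y. E x y \<Longrightarrow> E y x" "finite A" "finite S"
  shows "(\<Sum>u\<in>A. card (non_nbrs E u S)) = (\<Sum>w\<in>S. card (non_nbrs E w A))"
proof -
  have card_eq: "card (non_nbrs E x T) = (\<Sum>y\<in>T. if E x y then 0 else 1)" if "finite T" for x T
    using that by (simp add: sum.If_cases non_nbrs_def nbrs_def Diff_eq Int_def)
  have sym: "E u w = E w u" for u w
    using assms(1) by blast
  show ?thesis
    using assms(2,3) by (simp add: card_eq sum.swap[of _ S] sym)
qed

lemma sum_card_non_nbrs_le_sup_plex:
  assumes sym: "\<And>x y. E x y \<Longrightarrow> E y x"
    and "is_kplex V E k S'" "finite S'" "S \<union> A \<subseteq> S'" "A \<inter> S = {}"
  shows "int (\<Sum>u\<in>A. card (non_nbrs E u S)) \<le> sup_plex E k S"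
proof -
  have fin: "finite A" "finite S"
    using assms(3,4) finite_subset by auto
  have per_vertex: "int (card (non_nbrs E w A)) \<le> int k - int (card (non_nbrs E w S))"
    if "w \<in> S" for w
  proof -
    have "card (non_nbrs E w S) + card (non_nbrs E w A) = card (non_nbrs E w (S \<union> A))"
      using fin assms(5) by (simp add: card_non_nbrs_Un_disjoint Int_commute)
    also have "\<dots> \<le> k"
      using kplex_card_non_nbrs_le[OF assms(2,3), of w "S \<union> A"] that assms(4) by auto
    finally show ?thesis by linarith
  qed
  have "int (\<Sum>u\<in>A. card (non_nbrs E u S)) = (\<Sum>w\<in>S. int (card (non_nbrs E w A)))"
    using sum_card_non_nbrs_swap[OF sym fin] by simp
  also have "\<dots> \<le> sup_plex E k S"
    unfolding sup_plex_def using per_vertex by (intro sum_mono) auto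
  finally show ?thesis .
qed

theorem lemma5:
  fixes V :: "'a set" and E :: "'a \<Rightarrow> 'a \<Rightarrow> bool" and k :: nat
    and S C S' :: "'a set" and v :: 'a and vs :: "'a list"
  assumes graph: "simple_graph V E"
    and k1: "k \<ge> 1"
    and S_plex: "is_kplex V E k S"
    and C_sub: "C \<subseteq> V"
    and disj: "C \<inter> S = {}"
    and v_in: "v \<in> C"
    and vs_dist: "distinct vs"
    and vs_set: "set vs = nbrs E v \<inter> C"
    and vs_sorted: "sorted (map (\<lambda>u. card (non_nbrs E u S)) vs)"
    and S'_plex: "is_kplex V E k S'"
    and S'_lo: "S \<union> {v} \<subseteq> S'"
    and S'_hi: "S' \<subseteq> S \<union> C"
  shows "int (card S') \<le> int (card S) + int k - int (card (non_nbrs E v S))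
     + int (Max {i. i \<le> length vs \<and>
          int (\<Sum>u\<in>set (take i vs). card (non_nbrs E u S)) \<le> sup_plex E k S})"
proof -
  have sym: "\<And>x y. E x y \<Longrightarrow> E y x" and fin_S': "finite S'"
    using graph S'_plex finite_subset unfolding simple_graph_def is_kplex_def by auto
  have fin_S: "finite S"
    using S'_lo fin_S' finite_subset by blast
  define A where "A = (S' - S) \<inter> nbrs E v"
  define B where "B = non_nbrs E v (S' - S)"
  have card_S': "card S' = card S + card A + card B"
  proof -
    have "S' = S \<union> (A \<union> B)" "A \<inter> B = {}"
      using S'_lo by (auto simp: A_def B_def non_nbrs_def)
    moreover have "S \<inter> (A \<union> B) = {}"
      by (auto simp: A_def B_def non_nbrs_def)
    ultimately show ?thesis
      using fin_S' by (metis card_Un_disjoint finite_Un finite_subset Un_upper1 Un_upper2 add.assoc)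
  qed
  have "card (non_nbrs E v S) + card B \<le> k"
    using card_non_nbrs_Un_disjoint[of S "S' - S" E v] fin_S fin_S' S'_lo
      kplex_card_non_nbrs_le[OF S'_plex fin_S', of v S'] by (simp add: B_def Un_absorb1)
  moreover have "card A \<le> Max {i. i \<le> length vs \<and>
          int (\<Sum>u\<in>set (take i vs). card (non_nbrs E u S)) \<le> sup_plex E k S}"
  proof (rule card_le_Max_prefix_bound[OF vs_dist vs_sorted])
    show "A \<subseteq> set vs"
      using S'_hi vs_set by (auto simp: A_def)
    show "int (\<Sum>u\<in>A. card (non_nbrs E u S)) \<le> sup_plex E k S"
      by (rule sum_card_non_nbrs_le_sup_plex[OF sym S'_plex fin_S']) (use S'_lo in \<open>auto simp: A_def\<close>)
  qed
  ultimately show ?thesis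
    using card_S' by linarith
qed

end
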